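(* Let $X$ be a complex Banach space with open unit ball $B$, and let $Y$ be a closed subspace of $X$ of finite codimension with open unit ball $B_Y$. Then for every $f\in A_u(B)$, $Cl_B(f,0)=Cl_{B_Y}(f|_{B_Y},0)$.
   Context: $A_u(B)$ is the algebra of bounded holomorphic functions on $B$ that are uniformly continuous on $B$. For a Banach space $Z$ with open unit ball $B_Z$ and a function $g$ on $B_Z$, $Cl_{B_Z}(g,0)$ is the set of all $\lambda\in\mathbb C$ such that $\lambda=\lim_\alpha g(z_\alpha)$ for some net $(z_\alpha)$ in $B_Z$ converging weakly to $0$ (equivalently weak-star to $0$ in $Z^{**}$). *)

theory Defs
  imports "HOL-Analysis.Analysis"
begin

class complex_normed_vector = real_normed_vector +
  fixes scaleC :: "complex \<Rightarrow> 'a \<Rightarrow> 'a"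
  assumes scaleC_add_right: "scaleC a (x + y) = scaleC a x + scaleC a y"
    and scaleC_add_left: "scaleC (a + b) x = scaleC a x + scaleC b x"
    and scaleC_scaleC: "scaleC a (scaleC b x) = scaleC (a * b) x"
    and scaleC_one: "scaleC 1 x = x"
    and scaleC_of_real: "scaleC (of_real r) x = scaleR r x"
    and norm_scaleC: "norm (scaleC a x) = cmod a * norm x"

class complex_banach = complex_normed_vector + banach

instantiation complex :: complex_banach
begin
definition scaleC_complex :: "complex \<Rightarrow> complex \<Rightarrow> complex" where
  "scaleC_complex a x = a * x"
instance
  by standard (auto simp: scaleC_complex_def algebra_simps norm_mult scaleR_conv_of_real)
end

definition csubspace :: "'a::complex_normed_vector set \<Rightarrow> bool" where
  "csubspace Y \<longleftrightarrow> 0 \<in> Y \<and> (\<forall>x\<in>Y. \<forall>y\<in>Y. x + y \<in> Y) \<and> (\<forall>c. \<forall>x\<in>Y. scaleC c x \<in> Y)"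

definition finite_codim :: "'a::complex_normed_vector set \<Rightarrow> bool" where
  "finite_codim Y \<longleftrightarrow> (\<exists>S. finite S \<and>
      (\<forall>x. \<exists>y\<in>Y. \<exists>c. x = y + (\<Sum>s\<in>S. scaleC (c s) s)))"

definition bounded_clinear_functional_on ::
    "'a::complex_normed_vector set \<Rightarrow> ('a \<Rightarrow> complex) \<Rightarrow> bool" where
  "bounded_clinear_functional_on Y \<phi> \<longleftrightarrow>
     (\<forall>x\<in>Y. \<forall>y\<in>Y. \<phi> (x + y) = \<phi> x + \<phi> y) \<and>
     (\<forall>c. \<forall>x\<in>Y. \<phi> (scaleC c x) = c * \<phi> x) \<and>
     (\<exists>K. \<forall>x\<in>Y. cmod (\<phi> x) \<le> K * norm x)"

definition weakly_to_zero_in :: "'a::complex_normed_vector set \<Rightarrow> 'a filter \<Rightarrow> bool" where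
  "weakly_to_zero_in Y F \<longleftrightarrow>
     (\<forall>\<phi>. bounded_clinear_functional_on Y \<phi> \<longrightarrow> (\<phi> \<longlongrightarrow> 0) F)"

text \<open>Cluster set at 0: Cl_{B_Y}(g,0), with B_Y the open unit ball of the subspace Y
  (for Y = UNIV this is Cl_B(g,0)).  Nets are represented by proper filters.\<close>

definition cluster_set_zero ::
    "'a::complex_normed_vector set \<Rightarrow> ('a \<Rightarrow> complex) \<Rightarrow> complex set" where
  "cluster_set_zero Y g = {l. \<exists>F. F \<noteq> bot \<and>
      eventually (\<lambda>z. z \<in> Y \<inter> ball 0 1) F \<and>
      weakly_to_zero_in Y F \<and> (g \<longlongrightarrow> l) F}"

definition holomorphic_on_ban :: "('a::complex_normed_vector \<Rightarrow> complex) \<Rightarrow> 'a set \<Rightarrow> bool" where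
  "holomorphic_on_ban f U \<longleftrightarrow> (\<forall>x\<in>U. \<exists>D. (f has_derivative D) (at x) \<and>
      (\<forall>c h. D (scaleC c h) = c * D h))"

definition A_u :: "('a::complex_normed_vector \<Rightarrow> complex) set" where
  "A_u = {f. holomorphic_on_ban f (ball 0 1) \<and> bounded (f ` ball 0 1) \<and>
             uniformly_continuous_on (ball 0 1) f}"

end

theory Submission
  imports Defs
begin

(* The inclusion Cl_{B_Y}(f,0) \<subseteq> Cl_B(f,0) is formal: a net in B_Y that is
   weakly null in Y is weakly null in X, since functionals on X restrict to Y.
   For the converse we show that a closed subspace Y of finite codimension contains the range
   of id - P for a finite-rank operator P z = \<Sum>i. psi_i(z) s_i with continuous functionals
   psi_i.  P is built by adjoining the vectors s spanning a complement one at a time: Y + C s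
   is again closed, and the coefficient of s is a continuous functional on it.
   Now let z be a net in B, weakly null in X, with f(z) -> l.  Then P z -> 0 in norm, and
   y(z) = (z - P z) / (1 + norm (P z)) is a net in B_Y, weakly null in Y, with
   dist (y(z)) z <= 2 norm (P z) -> 0; uniform continuity of f gives f(y(z)) -> l. *)

lemma scaleC_zero_right [simp]: "scaleC a (0::'a::complex_normed_vector) = 0"
proof -
  have "scaleC a (0::'a) = scaleC a 0 + scaleC a 0" using scaleC_add_right[of a "0::'a" 0] by simp
  thus ?thesis by simp
qed

lemma scaleC_zero_left [simp]: "scaleC 0 (x::'a::complex_normed_vector) = 0"
  using scaleC_of_real[of 0 x] by simp

lemma scaleC_minus_left: "scaleC (- a) x = - scaleC a (x::'a::complex_normed_vector)"
  using scaleC_add_left[of a "-a" x] by (simp add: eq_neg_iff_add_eq_0 add.commute)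

lemma scaleC_diff_left: "scaleC (a - b) x = scaleC a x - scaleC b (x::'a::complex_normed_vector)"
  using scaleC_add_left[of a "-b" x] by (simp add: scaleC_minus_left)

lemma scaleC_minus_right: "scaleC a (- x) = - scaleC a (x::'a::complex_normed_vector)"
  using scaleC_add_right[of a x "-x"] by (simp add: eq_neg_iff_add_eq_0 add.commute)

lemma scaleC_diff_right: "scaleC a (x - y) = scaleC a x - scaleC a (y::'a::complex_normed_vector)"
  using scaleC_add_right[of a x "-y"] by (simp add: scaleC_minus_right)

lemma tendsto_scaleC_left:
  fixes s :: "'a::complex_normed_vector"
  assumes "(g \<longlongrightarrow> a) F"
  shows "((\<lambda>x. scaleC (g x) s) \<longlongrightarrow> scaleC a s) F"
proof -
  have "((\<lambda>x. cmod (g x - a) * norm s) \<longlongrightarrow> 0 * norm s) F"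
    using tendsto_norm_zero[OF LIM_zero[OF assms]] by (rule tendsto_mult[OF _ tendsto_const])
  hence "((\<lambda>x. norm (scaleC (g x - a) s)) \<longlongrightarrow> 0) F" by (simp only: norm_scaleC mult_zero_left)
  hence "((\<lambda>x. scaleC (g x - a) s) \<longlongrightarrow> 0) F" by (rule tendsto_norm_zero_cancel)
  hence "((\<lambda>x. scaleC (g x - a) s + scaleC a s) \<longlongrightarrow> 0 + scaleC a s) F"
    by (rule tendsto_add[OF _ tendsto_const])
  thus ?thesis by (simp add: scaleC_diff_left)
qed

lemma csubspace_zero: "csubspace Y \<Longrightarrow> 0 \<in> Y"
  and csubspace_add: "csubspace Y \<Longrightarrow> x \<in> Y \<Longrightarrow> y \<in> Y \<Longrightarrow> x + y \<in> Y"
  and csubspace_scaleC: "csubspace Y \<Longrightarrow> x \<in> Y \<Longrightarrow> scaleC c x \<in> Y"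
  by (simp_all add: csubspace_def)

lemma csubspace_scaleR: "csubspace Y \<Longrightarrow> x \<in> Y \<Longrightarrow> scaleR r x \<in> Y"
  by (metis csubspace_scaleC scaleC_of_real)

lemma csubspace_diff: "csubspace Y \<Longrightarrow> x \<in> Y \<Longrightarrow> y \<in> Y \<Longrightarrow> x - y \<in> Y"
  using csubspace_add[of Y x "scaleC (-1) y"] csubspace_scaleC[of Y y "-1"]
  by (simp add: scaleC_minus_left scaleC_one)

section \<open>Adjoining one vector to a closed subspace\<close>

definition line_ext :: "'a::complex_normed_vector set \<Rightarrow> 'a \<Rightarrow> 'a set" where
  "line_ext Y s = {y + scaleC c s | y c. y \<in> Y}"

lemma line_ext_csubspace:
  assumes Y: "csubspace Y"
  shows "csubspace (line_ext Y s)"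
  unfolding csubspace_def line_ext_def
proof (intro conjI ballI allI)
  show "0 \<in> {y + scaleC c s | y c. y \<in> Y}"
    using csubspace_zero[OF Y] by (auto intro!: exI[of _ 0])
next
  fix x z assume "x \<in> {y + scaleC c s | y c. y \<in> Y}" "z \<in> {y + scaleC c s | y c. y \<in> Y}"
  then obtain y1 c1 y2 c2 where "x = y1 + scaleC c1 s" "z = y2 + scaleC c2 s" "y1 \<in> Y" "y2 \<in> Y"
    by blast
  hence "x + z = (y1 + y2) + scaleC (c1 + c2) s" "y1 + y2 \<in> Y"
    using csubspace_add[OF Y] by (auto simp: scaleC_add_left algebra_simps)
  thus "x + z \<in> {y + scaleC c s | y c. y \<in> Y}" by blast
next
  fix a x assume "x \<in> {y + scaleC c s | y c. y \<in> Y}"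
  then obtain y1 c1 where "x = y1 + scaleC c1 s" "y1 \<in> Y" by blast
  hence "scaleC a x = scaleC a y1 + scaleC (a * c1) s" "scaleC a y1 \<in> Y"
    using csubspace_scaleC[OF Y] by (auto simp: scaleC_add_right scaleC_scaleC)
  thus "scaleC a x \<in> {y + scaleC c s | y c. y \<in> Y}" by blast
qed

lemma line_coef_norm_bound:
  assumes Y: "csubspace Y" "closed Y" and s: "s \<notin> Y"
  obtains d where "d > 0" "\<And>y c. y \<in> Y \<Longrightarrow> cmod c * d \<le> norm (y + scaleC c s)"
proof -
  define d where "d = infdist s Y"
  have "Y \<noteq> {}" using csubspace_zero[OF Y(1)] by auto
  hence "d \<noteq> 0" using in_closed_iff_infdist_zero[OF Y(2)] s d_def by simp
  hence dpos: "d > 0" using infdist_nonneg[of s Y] d_def by simp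
  have "cmod c * d \<le> norm (y + scaleC c s)" if y: "y \<in> Y" for y c
  proof (cases "c = 0")
    case False
    have mem: "- scaleC (1/c) y \<in> Y" using Y y by (simp add: csubspace_scaleC scaleC_minus_left[symmetric])
    have "d \<le> norm (s + scaleC (1/c) y)" using infdist_le[OF mem, of s] by (simp add: d_def dist_norm)
    hence "cmod c * d \<le> norm (scaleC c (s + scaleC (1/c) y))"
      by (simp add: mult_left_mono norm_scaleC)
    also have "\<dots> = norm (y + scaleC c s)" using False
      by (simp add: scaleC_add_right scaleC_scaleC scaleC_one add.commute)
    finally show ?thesis .
  qed simp
  thus ?thesis using dpos that by blast
qed

text \<open>Y + C s is closed: along a convergent sequence y n + c n s the coefficients c n are
  Cauchy by the bound above, so the Y-parts converge in the closed set Y.\<close>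

lemma line_ext_closed:
  assumes Y: "csubspace Y" "closed Y" and s: "s \<notin> Y"
  shows "closed (line_ext Y s)"
  unfolding closed_sequential_limits
proof (intro allI impI)
  fix x l assume x: "(\<forall>n. x n \<in> line_ext Y s) \<and> x \<longlonglongrightarrow> l"
  hence xl: "x \<longlonglongrightarrow> l" by blast
  have "\<exists>c. x n - scaleC c s \<in> Y" for n
  proof -
    obtain y c where "y \<in> Y" "x n = y + scaleC c s" using x unfolding line_ext_def by blast
    thus ?thesis by (intro exI[of _ c]) simp
  qed
  then obtain c where "\<And>n. x n - scaleC (c n) s \<in> Y" by metis
  define y where "y n = x n - scaleC (c n) s" for n
  have yY: "y n \<in> Y" and xe: "x n = y n + scaleC (c n) s" for n
    using \<open>\<And>n. x n - scaleC (c n) s \<in> Y\<close> by (simp_all add: y_def)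
  obtain d where d: "d > 0" "\<And>y c. y \<in> Y \<Longrightarrow> cmod c * d \<le> norm (y + scaleC c s)"
    using line_coef_norm_bound[OF Y s] by blast
  have "Cauchy c"
  proof (rule metric_CauchyI)
    fix e :: real assume e: "e > 0"
    then obtain M where M: "\<And>m n. m \<ge> M \<Longrightarrow> n \<ge> M \<Longrightarrow> dist (x m) (x n) < e * d"
      using metric_CauchyD[OF LIMSEQ_imp_Cauchy[OF xl], of "e * d"] d e by (meson mult_pos_pos)
    have "dist (c m) (c n) < e" if "m \<ge> M" "n \<ge> M" for m n
    proof -
      have "cmod (c m - c n) * d \<le> norm ((y m - y n) + scaleC (c m - c n) s)"
        using d(2) csubspace_diff[OF Y(1) yY yY] by blast
      also have "(y m - y n) + scaleC (c m - c n) s = x m - x n"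
        using xe[of m] xe[of n] by (simp add: scaleC_diff_left algebra_simps)
      also have "norm (x m - x n) < e * d" using M[OF that] by (simp add: dist_norm)
      finally show ?thesis using d(1) by (simp add: dist_norm)
    qed
    thus "\<exists>M. \<forall>m\<ge>M. \<forall>n\<ge>M. dist (c m) (c n) < e" by blast
  qed
  then obtain a where "c \<longlonglongrightarrow> a" using Cauchy_convergent_iff convergent_def by blast
  hence "(\<lambda>n. x n - scaleC (c n) s) \<longlonglongrightarrow> l - scaleC a s"
    by (intro tendsto_intros xl tendsto_scaleC_left)
  hence "y \<longlonglongrightarrow> l - scaleC a s" using xe by simp
  hence "l - scaleC a s \<in> Y" using Y(2) yY unfolding closed_sequential_limits by blast
  thus "l \<in> line_ext Y s" unfolding line_ext_def by (intro CollectI exI[of _ "l - scaleC a s"] exI[of _ a]) simp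
qed

text \<open>The coefficient of s in an element of Y + C s (well defined when s \<notin> Y).\<close>

definition line_coef :: "'a::complex_normed_vector set \<Rightarrow> 'a \<Rightarrow> 'a \<Rightarrow> complex" where
  "line_coef Y s w = (THE c. \<exists>y\<in>Y. w = y + scaleC c s)"

lemma line_coef_eq:
  assumes Y: "csubspace Y" and s: "s \<notin> Y" and y: "y \<in> Y"
  shows "line_coef Y s (y + scaleC c s) = c"
  unfolding line_coef_def
proof (rule the_equality)
  fix c' assume "\<exists>y'\<in>Y. y + scaleC c s = y' + scaleC c' s"
  then obtain y' where y': "y' \<in> Y" "scaleC (c - c') s = y' - y"
    by (auto simp: scaleC_diff_left algebra_simps)
  show "c' = c"
  proof (rule ccontr)
    assume "c' \<noteq> c"
    have "scaleC (1 / (c - c')) (scaleC (c - c') s) \<in> Y"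
      using y' y by (simp add: Y csubspace_scaleC csubspace_diff)
    thus False using \<open>c' \<noteq> c\<close> s by (simp add: scaleC_scaleC scaleC_one)
  qed
qed (use y in blast)

lemma line_coef_functional:
  assumes Y: "csubspace Y" "closed Y" and s: "s \<notin> Y"
  shows "bounded_clinear_functional_on (line_ext Y s) (line_coef Y s)"
proof -
  obtain d where d: "d > 0" "\<And>y c. y \<in> Y \<Longrightarrow> cmod c * d \<le> norm (y + scaleC c s)"
    using line_coef_norm_bound[OF Y s] by blast
  note coef = line_coef_eq[OF Y(1) s]
  have add: "line_coef Y s (x + z) = line_coef Y s x + line_coef Y s z"
    if xz: "x \<in> line_ext Y s" "z \<in> line_ext Y s" for x z
  proof -
    obtain y1 c1 y2 c2 where y: "y1 \<in> Y" "y2 \<in> Y" and xz: "x = y1 + scaleC c1 s" "z = y2 + scaleC c2 s"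
      using xz unfolding line_ext_def by blast
    have "x + z = (y1 + y2) + scaleC (c1 + c2) s"
      using xz by (simp add: scaleC_add_left algebra_simps)
    hence "line_coef Y s (x + z) = c1 + c2" using coef[OF csubspace_add[OF Y(1) y]] by simp
    thus ?thesis using coef[OF y(1)] coef[OF y(2)] xz by simp
  qed
  have scale: "line_coef Y s (scaleC a x) = a * line_coef Y s x" if x: "x \<in> line_ext Y s" for a x
  proof -
    obtain y c where y: "y \<in> Y" and xe: "x = y + scaleC c s" using x unfolding line_ext_def by blast
    have "scaleC a x = scaleC a y + scaleC (a * c) s"
      using xe by (simp add: scaleC_add_right scaleC_scaleC)
    hence "line_coef Y s (scaleC a x) = a * c" using coef[OF csubspace_scaleC[OF Y(1) y]] by simp
    thus ?thesis using coef[OF y] xe by simp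
  qed
  have bound: "cmod (line_coef Y s x) \<le> (1 / d) * norm x" if x: "x \<in> line_ext Y s" for x
  proof -
    obtain y c where y: "y \<in> Y" and xe: "x = y + scaleC c s" using x unfolding line_ext_def by blast
    have "cmod c * d \<le> norm x" using d(2)[OF y] xe by simp
    hence "cmod c \<le> (1 / d) * norm x" using d(1) by (simp add: field_simps)
    thus ?thesis using coef[OF y] xe by simp
  qed
  have "\<exists>K. \<forall>x\<in>line_ext Y s. cmod (line_coef Y s x) \<le> K * norm x" using bound by blast
  with add scale show ?thesis unfolding bounded_clinear_functional_on_def by blast
qed

section \<open>Bounded complex-linear operators and finite-rank operators\<close>

definition bounded_clinear_op :: "('a::complex_normed_vector \<Rightarrow> 'a) \<Rightarrow> bool" where
  "bounded_clinear_op W \<longleftrightarrow> (\<forall>x y. W (x + y) = W x + W y) \<and>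
     (\<forall>c x. W (scaleC c x) = scaleC c (W x)) \<and> (\<exists>K. \<forall>x. norm (W x) \<le> K * norm x)"

lemma bounded_clinear_op_complement:
  assumes "bounded_clinear_op P"
  shows "bounded_clinear_op (\<lambda>z. z - P z)"
proof -
  obtain K where K: "\<And>x. norm (P x) \<le> K * norm x"
    using assms unfolding bounded_clinear_op_def by blast
  have "norm (x - P x) \<le> (1 + K) * norm x" for x
    using norm_triangle_ineq4[of x "P x"] K[of x] by (simp add: algebra_simps)
  thus ?thesis using assms unfolding bounded_clinear_op_def by (auto simp: scaleC_diff_right)
qed

lemma functional_comp_op:
  assumes \<phi>: "bounded_clinear_functional_on Y \<phi>" and W: "bounded_clinear_op W"
    and WY: "\<And>z. W z \<in> Y"
  shows "bounded_clinear_functional_on UNIV (\<lambda>z. \<phi> (W z))"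
proof -
  obtain K\<phi> where K\<phi>: "\<And>x. x \<in> Y \<Longrightarrow> cmod (\<phi> x) \<le> K\<phi> * norm x"
    using \<phi> unfolding bounded_clinear_functional_on_def by blast
  obtain KW where KW: "\<And>x. norm (W x) \<le> KW * norm x"
    using W unfolding bounded_clinear_op_def by blast
  have "cmod (\<phi> (W x)) \<le> (max K\<phi> 0 * KW) * norm x" for x
  proof -
    have "cmod (\<phi> (W x)) \<le> max K\<phi> 0 * norm (W x)"
      using K\<phi>[OF WY] by (meson max.cobounded1 mult_right_mono norm_ge_zero order_trans)
    also have "\<dots> \<le> max K\<phi> 0 * (KW * norm x)" using KW by (simp add: mult_left_mono)
    finally show ?thesis by simp
  qed
  with \<phi> W WY show ?thesis
    unfolding bounded_clinear_functional_on_def bounded_clinear_op_def by auto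
qed

inductive finite_rank_op :: "('a::complex_normed_vector \<Rightarrow> 'a) \<Rightarrow> bool" where
  zero: "finite_rank_op (\<lambda>_. 0)"
| extend: "finite_rank_op P \<Longrightarrow> bounded_clinear_functional_on UNIV \<psi> \<Longrightarrow>
    finite_rank_op (\<lambda>z. P z + scaleC (\<psi> z) s)"

lemma finite_rank_op_bounded:
  assumes "finite_rank_op P"
  shows "bounded_clinear_op P"
  using assms
proof (induction rule: finite_rank_op.induct)
  case zero
  show ?case unfolding bounded_clinear_op_def by (auto intro!: exI[of _ 0])
next
  case (extend P \<psi> s)
  obtain K where K: "\<And>x. norm (P x) \<le> K * norm x"
    using extend.IH unfolding bounded_clinear_op_def by blast
  obtain K\<psi> where K\<psi>: "\<And>x. cmod (\<psi> x) \<le> K\<psi> * norm x"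
    using extend.hyps(2) unfolding bounded_clinear_functional_on_def by blast
  have bound: "norm (P x + scaleC (\<psi> x) s) \<le> (K + K\<psi> * norm s) * norm x" for x
  proof -
    have "norm (P x + scaleC (\<psi> x) s) \<le> K * norm x + K\<psi> * norm x * norm s"
      using norm_triangle_ineq[of "P x" "scaleC (\<psi> x) s"] K[of x]
        mult_right_mono[OF K\<psi>[of x] norm_ge_zero[of s]]
      by (simp add: norm_scaleC)
    thus ?thesis by (simp add: algebra_simps)
  qed
  moreover have "P (x + y) + scaleC (\<psi> (x + y)) s = (P x + scaleC (\<psi> x) s) + (P y + scaleC (\<psi> y) s)"
    for x y using extend.IH extend.hyps(2)
    unfolding bounded_clinear_op_def bounded_clinear_functional_on_def
    by (simp add: scaleC_add_left algebra_simps)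
  moreover have "P (scaleC c x) + scaleC (\<psi> (scaleC c x)) s = scaleC c (P x + scaleC (\<psi> x) s)"
    for c x using extend.IH extend.hyps(2)
    unfolding bounded_clinear_op_def bounded_clinear_functional_on_def
    by (simp add: scaleC_add_right scaleC_scaleC)
  ultimately show ?case unfolding bounded_clinear_op_def by blast
qed

lemma finite_rank_op_weakly_null:
  assumes "finite_rank_op P" and F: "weakly_to_zero_in UNIV F"
  shows "(P \<longlongrightarrow> 0) F"
  using assms(1)
proof (induction rule: finite_rank_op.induct)
  case (extend P \<psi> s)
  have "(\<psi> \<longlongrightarrow> 0) F" using extend.hyps(2) F unfolding weakly_to_zero_in_def by blast
  hence "((\<lambda>z. scaleC (\<psi> z) s) \<longlongrightarrow> scaleC 0 s) F" by (rule tendsto_scaleC_left)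
  with extend.IH show ?case using tendsto_add by fastforce
qed simp

section \<open>Closed subspaces of finite codimension are complemented\<close>

text \<open>If Y + span S is the whole space, then Y contains the range of id - P for some
  finite-rank operator P.  Induction on S: the first vector s is absorbed into Y + C s, and
  the coefficient of s supplies the new rank-one term.\<close>

lemma complement_by_finite_rank:
  assumes "finite S"
  shows "csubspace Y \<Longrightarrow> closed Y \<Longrightarrow> (\<forall>x. \<exists>c. x - (\<Sum>t\<in>S. scaleC (c t) t) \<in> Y) \<Longrightarrow>
    \<exists>P. finite_rank_op P \<and> (\<forall>z. z - P z \<in> Y)"
  using assms
proof (induction S arbitrary: Y rule: finite_induct)
  case empty
  thus ?case using finite_rank_op.zero by fastforce
next
  case (insert s S)
  note Y = insert.prems(1,2)
  have split: "x - (\<Sum>t\<in>S. scaleC (c t) t) = (x - (\<Sum>t\<in>insert s S. scaleC (c t) t)) + scaleC (c s) s"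
    for x c using insert.hyps by (simp add: algebra_simps)
  show ?case
  proof (cases "s \<in> Y")
    case True
    have "\<exists>c. x - (\<Sum>t\<in>S. scaleC (c t) t) \<in> Y" for x
    proof -
      obtain c where "x - (\<Sum>t\<in>insert s S. scaleC (c t) t) \<in> Y" using insert.prems(3) by blast
      hence "x - (\<Sum>t\<in>S. scaleC (c t) t) \<in> Y"
        unfolding split by (intro csubspace_add[OF Y(1)] csubspace_scaleC[OF Y(1) True])
      thus ?thesis by blast
    qed
    thus ?thesis using insert.IH Y by blast
  next
    case False
    have "\<exists>c. x - (\<Sum>t\<in>S. scaleC (c t) t) \<in> line_ext Y s" for x
    proof -
      obtain c where "x - (\<Sum>t\<in>insert s S. scaleC (c t) t) \<in> Y" using insert.prems(3) by blast
      hence "x - (\<Sum>t\<in>S. scaleC (c t) t) \<in> line_ext Y s"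
        unfolding split line_ext_def by blast
      thus ?thesis by blast
    qed
    then obtain P where P: "finite_rank_op P" and PY: "\<And>z. z - P z \<in> line_ext Y s"
      using insert.IH[OF line_ext_csubspace[OF Y(1)] line_ext_closed[OF Y False]] by blast
    define \<psi> where "\<psi> z = line_coef Y s (z - P z)" for z
    have "bounded_clinear_functional_on UNIV \<psi>"
      unfolding \<psi>_def using functional_comp_op[OF line_coef_functional[OF Y False]
        bounded_clinear_op_complement[OF finite_rank_op_bounded[OF P]] PY] .
    hence "finite_rank_op (\<lambda>z. P z + scaleC (\<psi> z) s)" by (rule finite_rank_op.extend[OF P])
    moreover have "z - (P z + scaleC (\<psi> z) s) \<in> Y" for z
    proof -
      obtain y c where y: "y \<in> Y" and yc: "z - P z = y + scaleC c s"
        using PY[of z] unfolding line_ext_def by blast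
      hence "\<psi> z = c" unfolding \<psi>_def using line_coef_eq[OF Y(1) False] by simp
      hence "z - (P z + scaleC (\<psi> z) s) = y" using yc by (simp add: algebra_simps)
      thus ?thesis using y by simp
    qed
    ultimately show ?thesis by blast
  qed
qed

section \<open>Cluster sets at 0\<close>

text \<open>A net in B_Y that is weakly null in Y is weakly null in X, since functionals on the whole
  space restrict to functionals on Y.  This holds for any set Y.\<close>

lemma cluster_set_zero_subset_UNIV: "cluster_set_zero Y f \<subseteq> cluster_set_zero UNIV f"
proof
  fix l assume "l \<in> cluster_set_zero Y f"
  then obtain F where F: "F \<noteq> bot" "eventually (\<lambda>z. z \<in> Y \<inter> ball 0 1) F"
    "weakly_to_zero_in Y F" "(f \<longlongrightarrow> l) F"
    unfolding cluster_set_zero_def by blast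
  have "eventually (\<lambda>z. z \<in> UNIV \<inter> ball 0 1) F" using F(2) by (rule eventually_mono) auto
  moreover have "weakly_to_zero_in UNIV F"
    using F(3) unfolding weakly_to_zero_in_def bounded_clinear_functional_on_def by blast
  ultimately show "l \<in> cluster_set_zero UNIV f" using F unfolding cluster_set_zero_def by blast
qed

lemma shrink_into_ball:
  fixes z p :: "'a::real_normed_vector"
  assumes "z \<in> ball 0 1"
  shows "norm (scaleR (1 / (1 + norm p)) (z - p)) < 1"
    and "dist (scaleR (1 / (1 + norm p)) (z - p)) z \<le> 2 * norm p"
proof -
  have z: "norm z < 1" using assms by simp
  define r where "r = 1 / (1 + norm p)"
  have pos: "1 + norm p > 0" by (simp add: add_pos_nonneg)
  hence r: "0 < r" "r \<le> 1" "r * (1 + norm p) = 1" unfolding r_def by (simp_all add: field_simps)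
  have "norm (scaleR r (z - p)) \<le> r * (norm z + norm p)"
    using r(1) norm_triangle_ineq4[of z p] by (simp add: mult_left_mono)
  also have "\<dots> < r * (1 + norm p)" using r(1) z by simp
  finally show "norm (scaleR (1 / (1 + norm p)) (z - p)) < 1" using r(3) unfolding r_def by simp
  have "scaleR r (z - p) - z = - (scaleR (1 - r) z + scaleR r p)" by (simp add: algebra_simps)
  hence "dist (scaleR r (z - p)) z = norm (scaleR (1 - r) z + scaleR r p)"
    by (simp only: dist_norm norm_minus_cancel)
  also have "\<dots> \<le> norm (scaleR (1 - r) z) + norm (scaleR r p)" by (rule norm_triangle_ineq)
  also have "\<dots> = (1 - r) * norm z + r * norm p" using r by simp
  also have "\<dots> \<le> (1 - r) * 1 + 1 * norm p"
    using r z by (intro add_mono mult_mono) auto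
  also have "1 - r = r * norm p" using r(3) by (simp add: algebra_simps)
  also have "r * norm p * 1 + 1 * norm p \<le> 2 * norm p"
    using r(1,2) mult_left_le_one_le[of "norm p" r] by simp
  finally show "dist (scaleR (1 / (1 + norm p)) (z - p)) z \<le> 2 * norm p" unfolding r_def .
qed

lemma weakly_null_image:
  assumes F: "weakly_to_zero_in UNIV F" and W: "bounded_clinear_op W" and WY: "\<And>z. W z \<in> Y"
    and r: "(r \<longlongrightarrow> a) F"
  shows "weakly_to_zero_in Y (filtermap (\<lambda>z. scaleR (r z) (W z)) F)"
  unfolding weakly_to_zero_in_def filterlim_filtermap
proof (intro allI impI)
  fix \<phi> assume \<phi>: "bounded_clinear_functional_on Y \<phi>"
  have "((\<lambda>z. \<phi> (W z)) \<longlongrightarrow> 0) F"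
    using functional_comp_op[OF \<phi> W WY] F unfolding weakly_to_zero_in_def by blast
  hence "((\<lambda>z. of_real (r z) * \<phi> (W z)) \<longlongrightarrow> of_real a * 0) F" by (intro tendsto_intros r)
  moreover have "\<phi> (scaleR (r z) (W z)) = of_real (r z) * \<phi> (W z)" for z
    using \<phi> WY unfolding bounded_clinear_functional_on_def by (simp add: scaleC_of_real[symmetric])
  ultimately show "((\<lambda>z. \<phi> (scaleR (r z) (W z))) \<longlongrightarrow> 0) F" by simp
qed

lemma uniformly_continuous_on_tendsto_close:
  fixes f :: "'a::metric_space \<Rightarrow> 'b::metric_space"
  assumes uc: "uniformly_continuous_on S f"
    and ev: "eventually (\<lambda>x. a x \<in> S) F" "eventually (\<lambda>x. b x \<in> S) F"
    and close: "((\<lambda>x. dist (a x) (b x)) \<longlongrightarrow> 0) F" and lim: "((\<lambda>x. f (b x)) \<longlongrightarrow> l) F"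
  shows "((\<lambda>x. f (a x)) \<longlongrightarrow> l) F"
  unfolding tendsto_iff
proof (intro allI impI)
  fix e :: real assume e: "e > 0"
  then obtain d where d: "d > 0"
    "\<And>x x'. x \<in> S \<Longrightarrow> x' \<in> S \<Longrightarrow> dist x' x < d \<Longrightarrow> dist (f x') (f x) < e / 2"
    using uc unfolding uniformly_continuous_on_def by (meson half_gt_zero)
  have "eventually (\<lambda>x. dist (a x) (b x) < d) F" using close d(1) unfolding tendsto_iff by simp
  moreover have "eventually (\<lambda>x. dist (f (b x)) l < e / 2) F"
    using lim half_gt_zero[OF e] unfolding tendsto_iff by blast
  ultimately show "eventually (\<lambda>x. dist (f (a x)) l < e) F" using ev
  proof eventually_elim
    case (elim x)
    hence "dist (f (a x)) (f (b x)) < e / 2" using d(2) by blast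
    thus ?case using elim dist_triangle[of "f (a x)" l "f (b x)"] by linarith
  qed
qed

lemma cluster_set_zero_UNIV_subset:
  assumes Y: "csubspace Y" and P: "finite_rank_op P" and PY: "\<And>z. z - P z \<in> Y"
    and uc: "uniformly_continuous_on (ball 0 1) f"
  shows "cluster_set_zero UNIV f \<subseteq> cluster_set_zero Y f"
proof
  fix l assume "l \<in> cluster_set_zero UNIV f"
  then obtain F where F: "F \<noteq> bot" "eventually (\<lambda>z. z \<in> ball 0 1) F"
    "weakly_to_zero_in UNIV F" "(f \<longlongrightarrow> l) F"
    unfolding cluster_set_zero_def by auto
  define r where "r z = 1 / (1 + norm (P z))" for z
  define y where "y z = scaleR (r z) (z - P z)" for z
  have P0: "(P \<longlongrightarrow> 0) F" using finite_rank_op_weakly_null[OF P F(3)] .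
  have "((\<lambda>z. 1 / (1 + norm (P z))) \<longlongrightarrow> 1 / (1 + norm (0::'a))) F"
    by (intro tendsto_intros P0) simp
  hence r1: "(r \<longlongrightarrow> 1) F" unfolding r_def by simp
  have inB: "eventually (\<lambda>z. y z \<in> Y \<inter> ball 0 1) F"
    using F(2)
  proof eventually_elim
    case (elim z)
    have "y z \<in> Y" unfolding y_def by (rule csubspace_scaleR[OF Y PY])
    moreover have "norm (y z) < 1" unfolding y_def r_def by (rule shrink_into_ball(1)[OF elim])
    ultimately show ?case by simp
  qed
  have weak: "weakly_to_zero_in Y (filtermap y F)" unfolding y_def
    by (rule weakly_null_image[OF F(3) bounded_clinear_op_complement[OF finite_rank_op_bounded[OF P]] PY r1])
  have close: "((\<lambda>z. dist (y z) z) \<longlongrightarrow> 0) F"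
  proof (rule tendsto_sandwich[where f = "\<lambda>_. 0" and h = "\<lambda>z. 2 * norm (P z)"])
    show "eventually (\<lambda>z. dist (y z) z \<le> 2 * norm (P z)) F"
      using F(2) unfolding y_def r_def by eventually_elim (rule shrink_into_ball(2))
    show "((\<lambda>z. 2 * norm (P z)) \<longlongrightarrow> 0) F" using tendsto_mult_right_zero[OF tendsto_norm_zero[OF P0]] .
  qed auto
  have "eventually (\<lambda>z. y z \<in> ball 0 1) F" using inB by (rule eventually_mono) simp
  hence "((\<lambda>z. f (y z)) \<longlongrightarrow> l) F"
    using uniformly_continuous_on_tendsto_close[OF uc _ F(2) close F(4)] by blast
  hence "(f \<longlongrightarrow> l) (filtermap y F)" unfolding filterlim_filtermap .
  moreover have "filtermap y F \<noteq> bot" using F(1) by (simp add: filtermap_bot_iff)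
  moreover have "eventually (\<lambda>z. z \<in> Y \<inter> ball 0 1) (filtermap y F)"
    using inB by (simp add: eventually_filtermap)
  ultimately show "l \<in> cluster_set_zero Y f" using weak unfolding cluster_set_zero_def by blast
qed

theorem proposition2p5:
  fixes Y :: "'a::complex_banach set" and f :: "'a \<Rightarrow> complex"
  assumes "csubspace Y" and "closed Y" and "finite_codim Y"
    and "f \<in> A_u"
  shows "cluster_set_zero UNIV f = cluster_set_zero Y f"
proof -
  obtain S where "finite S" and span: "\<forall>x. \<exists>y\<in>Y. \<exists>c. x = y + (\<Sum>s\<in>S. scaleC (c s) s)"
    using assms(3) unfolding finite_codim_def by blast
  have "\<forall>x. \<exists>c. x - (\<Sum>s\<in>S. scaleC (c s) s) \<in> Y"
    using span by (metis add_diff_cancel_right')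
  then obtain P where "finite_rank_op P" and "\<And>z. z - P z \<in> Y"
    using complement_by_finite_rank[OF \<open>finite S\<close> assms(1,2)] by blast
  moreover have "uniformly_continuous_on (ball 0 1) f" using assms(4) unfolding A_u_def by blast
  ultimately have "cluster_set_zero UNIV f \<subseteq> cluster_set_zero Y f"
    using cluster_set_zero_UNIV_subset[OF assms(1)] by blast
  thus ?thesis using cluster_set_zero_subset_UNIV by blast
qed

end
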